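(* Let $\phi\in\,]0,\pi[$, $M\in\mathbb{R}$, $N>0$, and let $\Sigma$ be the Keplerian branch around ${\rm O}$ in the plane ${\rm O}xy$ with equation $r=My+N$. The affine map $(x_1,y_1)\mapsto(x_3,y_3)$ defined by $x_1=x_3-M\frac{\cos\phi}{\sin\phi}y_3-N\cos\phi$, $y_1=\frac{1}{\sin\phi}y_3$ sends any horizontal chord ${\rm A}{\rm B}$ of $\Sigma$ (two distinct points of $\Sigma$ with the same ordinate) onto a horizontal chord ${\rm A}'{\rm B}'$ of the image branch with $\|{\rm A}'{\rm B}'\|=\|{\rm A}{\rm B}\|$ and $\|{\rm O}{\rm A}'\|+\|{\rm O}{\rm B}'\|=\|{\rm O}{\rm A}\|+\|{\rm O}{\rm B}\|$.
   Context: In the Euclidean plane ${\rm O}xy$, $r=\sqrt{x^2+y^2}$. A Keplerian branch around ${\rm O}$ is the image of a solution of Newton's system $\ddot q=-q/\|q\|^3$ (extended through collisions by bouncing back along the same ray). For $\gamma>0$, the set of points satisfying $r=\alpha x+\beta y+\gamma$ is a Keplerian branch around ${\rm O}$; the image of $\Sigma$ by the given map is the Keplerian branch $r=x\cos\phi+yM\sin\phi+N\sin^2\phi$. *)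

theory Defs
  imports "HOL-Analysis.Analysis"
begin

text \<open>Points of the plane Oxy are pairs (x,y); the norm on real \<times> real is the
Euclidean one, so norm p = r = sqrt(x^2+y^2) and dist is Euclidean distance.\<close>
definition kepler_branch :: "real \<Rightarrow> real \<Rightarrow> real \<Rightarrow> (real \<times> real) set" where
  "kepler_branch \<alpha> \<beta> \<gamma> = {p. norm p = \<alpha> * fst p + \<beta> * snd p + \<gamma>}"

definition affine_rel :: "real \<Rightarrow> real \<Rightarrow> real \<Rightarrow> real \<times> real \<Rightarrow> real \<times> real \<Rightarrow> bool" where
  "affine_rel \<phi> M N P Q \<longleftrightarrow>
     fst P = fst Q - M * (cos \<phi> / sin \<phi>) * snd Q - N * cos \<phi> \<and>
     snd P = snd Q / sin \<phi>"

end

theory Submission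
  imports Defs
begin

text \<open>On \<open>\<Sigma>\<close> we have \<open>r = M y + N\<close>, so the map reads \<open>(x, y) \<mapsto> (x + r cos \<phi>, y sin \<phi>)\<close>.
Using \<open>x\<^sup>2 + y\<^sup>2 = r\<^sup>2\<close> and \<open>cos\<^sup>2 \<phi> + sin\<^sup>2 \<phi> = 1\<close>, the image point has distance \<open>r + x cos \<phi>\<close>
to \<open>O\<close>, which is exactly the equation of the image branch. A horizontal chord of \<open>\<Sigma>\<close> is
symmetric, \<open>(\<plusminus>a, y)\<close>, so the terms \<open>\<plusminus>a cos \<phi>\<close> cancel in the sum of the focal distances,
while on a horizontal line the map is just a translation.\<close>

lemma affine_rel_iff:
  assumes "sin \<phi> \<noteq> 0"
  shows "affine_rel \<phi> M N P Q \<longleftrightarrow> Q = (fst P + cos \<phi> * (M * snd P + N), snd P * sin \<phi>)"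
proof -
  have snd_iff: "snd P = snd Q / sin \<phi> \<longleftrightarrow> snd Q = snd P * sin \<phi>"
    using assms by (auto simp: field_simps)
  have "M * (cos \<phi> / sin \<phi>) * (snd P * sin \<phi>) = cos \<phi> * M * snd P"
    using assms by simp
  then show ?thesis
    unfolding affine_rel_def snd_iff by (cases Q) (auto simp: algebra_simps)
qed

lemma norm_focal_shift:
  fixes p :: "real \<times> real"
  assumes "norm p = r" and "c\<^sup>2 + s\<^sup>2 = 1"
  shows "norm (fst p + c * r, snd p * s) = r + c * fst p"
proof -
  obtain x y where p: "p = (x, y)" by (cases p)
  have r2: "x\<^sup>2 + y\<^sup>2 = r\<^sup>2"
    using assms(1) p by (auto simp: norm_Pair)
  have "\<bar>x\<bar> \<le> r"
    using assms(1) p norm_fst_le[of x y] by simp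
  moreover have "\<bar>c\<bar> \<le> 1"
    using assms(2) by (metis abs_square_le_1 le_add_same_cancel1 zero_le_power2)
  ultimately have "\<bar>c * x\<bar> \<le> r"
    by (metis abs_ge_zero abs_mult mult_left_le_one_le order_trans)
  then have nonneg: "r + c * x \<ge> 0" by linarith
  have "(x + c * r)\<^sup>2 + (y * s)\<^sup>2 = (r + c * x)\<^sup>2 + (c\<^sup>2 + s\<^sup>2 - 1) * y\<^sup>2 + (1 - c\<^sup>2) * (x\<^sup>2 + y\<^sup>2 - r\<^sup>2)"
    by (simp add: power2_eq_square algebra_simps)
  also have "\<dots> = (r + c * x)\<^sup>2" using assms(2) r2 by simp
  finally show ?thesis using nonneg p by (simp add: norm_Pair)
qed

lemma kepler_branch_image:
  fixes \<phi> :: real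
  assumes "p \<in> kepler_branch 0 M N"
  defines "q \<equiv> (fst p + cos \<phi> * (M * snd p + N), snd p * sin \<phi>)"
  shows "q \<in> kepler_branch (cos \<phi>) (M * sin \<phi>) (N * (sin \<phi>)\<^sup>2)"
    and "norm q = norm p + cos \<phi> * fst p"
proof -
  have r: "norm p = M * snd p + N" using assms(1) by (simp add: kepler_branch_def)
  show norm_q: "norm q = norm p + cos \<phi> * fst p"
    unfolding q_def r by (rule norm_focal_shift[OF r]) simp
  have "norm q = cos \<phi> * fst q + M * sin \<phi> * snd q + N * (sin \<phi>)\<^sup>2"
  proof -
    have "(cos \<phi>)\<^sup>2 + (sin \<phi>)\<^sup>2 = 1" by simp
    then have "M * snd p + N + cos \<phi> * fst p
        = cos \<phi> * (fst p + cos \<phi> * (M * snd p + N)) + M * sin \<phi> * (snd p * sin \<phi>) + N * (sin \<phi>)\<^sup>2"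
      by algebra
    then show ?thesis using norm_q r by (simp add: q_def)
  qed
  then show "q \<in> kepler_branch (cos \<phi>) (M * sin \<phi>) (N * (sin \<phi>)\<^sup>2)"
    by (simp add: kepler_branch_def)
qed

lemma horizontal_chord_kepler_branch:
  assumes "A \<in> kepler_branch 0 \<beta> \<gamma>" "B \<in> kepler_branch 0 \<beta> \<gamma>" "snd A = snd B"
  shows "norm B = norm A" and "fst B = - fst A \<or> B = A"
proof -
  show "norm B = norm A" using assms by (simp add: kepler_branch_def)
  then have "(fst B)\<^sup>2 = (fst A)\<^sup>2"
    using assms(3) by (cases A, cases B) (simp add: norm_Pair)
  then show "fst B = - fst A \<or> B = A"
    using assms(3) by (metis power2_eq_iff prod.expand)
qed

text \<open>The hypothesis \<open>0 < N\<close> only makes \<open>\<Sigma>\<close> a genuine branch; the computation does not use it.\<close>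

theorem lemma8:
  fixes \<phi> M N :: real and A B A' B' :: "real \<times> real"
  assumes "0 < \<phi>" "\<phi> < pi" "0 < N"
    and "A \<in> kepler_branch 0 M N" "B \<in> kepler_branch 0 M N"
    and "A \<noteq> B" "snd A = snd B"
    and "affine_rel \<phi> M N A A'" "affine_rel \<phi> M N B B'"
  shows "A' \<in> kepler_branch (cos \<phi>) (M * sin \<phi>) (N * (sin \<phi>)\<^sup>2)
       \<and> B' \<in> kepler_branch (cos \<phi>) (M * sin \<phi>) (N * (sin \<phi>)\<^sup>2)
       \<and> A' \<noteq> B' \<and> snd A' = snd B'
       \<and> dist A' B' = dist A B
       \<and> norm A' + norm B' = norm A + norm B"
proof -
  have "sin \<phi> \<noteq> 0" using assms(1,2) sin_gt_zero by fastforce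
  then have A': "A' = (fst A + cos \<phi> * (M * snd A + N), snd A * sin \<phi>)"
    and B': "B' = (fst B + cos \<phi> * (M * snd B + N), snd B * sin \<phi>)"
    using assms(8,9) affine_rel_iff by auto
  have "fst A \<noteq> fst B" using assms(6,7) by (metis prod_eqI)
  then have "fst B = - fst A" and "norm B = norm A"
    using horizontal_chord_kepler_branch[OF assms(4,5,7)] assms(6) by auto
  moreover have "norm A' = norm A + cos \<phi> * fst A" "norm B' = norm B + cos \<phi> * fst B"
    using kepler_branch_image(2)[OF assms(4), of \<phi>] kepler_branch_image(2)[OF assms(5), of \<phi>] A' B'
    by simp_all
  ultimately have "norm A' + norm B' = norm A + norm B" by simp
  moreover have "A' \<noteq> B'" and "snd A' = snd B'" and "dist A' B' = dist A B"
    using A' B' assms(7) \<open>fst A \<noteq> fst B\<close>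
    by (cases A, cases B, simp add: dist_Pair_Pair dist_real_def)+
  moreover have "A' \<in> kepler_branch (cos \<phi>) (M * sin \<phi>) (N * (sin \<phi>)\<^sup>2)"
    and "B' \<in> kepler_branch (cos \<phi>) (M * sin \<phi>) (N * (sin \<phi>)\<^sup>2)"
    using kepler_branch_image(1)[OF assms(4), of \<phi>] kepler_branch_image(1)[OF assms(5), of \<phi>] A' B'
    by simp_all
  ultimately show ?thesis by blast
qed

end
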